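(* Let $T$ be a prae-dilator and let $(X,\iota_X,L_X)$ be a Bachmann-Howard system for $T$. Then the relation $<_{\vartheta_T(X)}$ is a (strict) linear order on $\vartheta_T(X)$.
   Context: The finite subset functor $[\cdot]^{<\omega}$ sends a set $X$ to the set of its finite subsets and a function $f$ to $[f]^{<\omega}(a)=\{f(x)\mid x\in a\}$; subsets of linear orders are regarded as suborders. A prae-dilator consists of an endofunctor $X\mapsto T_X$ on the category of linear orders (morphisms: order embeddings) and a natural transformation $\operatorname{supp}^T:T\Rightarrow[\cdot]^{<\omega}$ such that for every linear order $X$ and every $\sigma\in T_X$ we have $\sigma\in\operatorname{rng}(T_{\iota_\sigma})$, where $\iota_\sigma:\operatorname{supp}^T_X(\sigma)\hookrightarrow X$ is the inclusion. For a linear order $Z$ and finite $a,b\subseteq Z$ write $a<^{\operatorname{fin}}_Z b$ iff for every $s\in a$ there is $t\in b$ with $s<_Z t$; $\leq^{\operatorname{fin}}_Z$ is defined analogously with $\leq_Z$; singletons $\{s\}$ are written $s$. For a linear order $X$ let $\vartheta_T(X)$ be the set of formal terms $\vartheta\sigma$ with $\sigma\in T_X$. A Bachmann-Howard system (for $T$) is a triple $(X,\iota_X,L_X)$ with $X$ a linear order, $\iota_X:X\to\vartheta_T(X)$ and $L_X:X\to\omega$ functions, such that $L_{\vartheta_T(X)}\circ\iota_X=L_X$, where $L_{\vartheta_T(X)}(\vartheta\sigma):=\max\{L_X(x)\mid x\in\operatorname{supp}^T_X(\sigma)\}+1$ (maximum of the empty set is $0$). For such a system the relation $\vartheta\sigma<_{\vartheta_T(X)}\vartheta\tau$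 is defined by recursion on $L_{\vartheta_T(X)}(\vartheta\sigma)+L_{\vartheta_T(X)}(\vartheta\tau)$ to hold iff either (a) $\sigma<_{T_X}\tau$ and $[\iota_X]^{<\omega}(\operatorname{supp}^T_X(\sigma))<^{\operatorname{fin}}_{\vartheta_T(X)}\vartheta\tau$, or (b) $\tau<_{T_X}\sigma$ and $\vartheta\sigma\leq^{\operatorname{fin}}_{\vartheta_T(X)}[\iota_X]^{<\omega}(\operatorname{supp}^T_X(\tau))$. (Here $\leq_{\vartheta_T(X)}$ means $<_{\vartheta_T(X)}$ or equality of terms; the recursion is well-defined since $L_{\vartheta_T(X)}(\iota_X(x))<L_{\vartheta_T(X)}(\vartheta\sigma)$ for $x\in\operatorname{supp}^T_X(\sigma)$.) *)

theory Defs
  imports Main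
begin

definition lin_ord :: "'a set \<Rightarrow> 'a rel \<Rightarrow> bool" where
  "lin_ord A r \<longleftrightarrow> strict_linear_order_on A r \<and> r \<subseteq> A \<times> A"

definition restr :: "'a rel \<Rightarrow> 'a set \<Rightarrow> 'a rel" where
  "restr r S = r \<inter> (S \<times> S)"

definition ord_emb :: "'a set \<Rightarrow> 'a rel \<Rightarrow> 'c set \<Rightarrow> 'c rel \<Rightarrow> ('a \<Rightarrow> 'c) \<Rightarrow> bool" where
  "ord_emb A r B s f \<longleftrightarrow> f ` A \<subseteq> B \<and>
     (\<forall>x\<in>A. \<forall>y\<in>A. (x, y) \<in> r \<longleftrightarrow> (f x, f y) \<in> s)"

text \<open>A prae-dilator, acting on linear orders whose carriers are subsets of the type 'a.
  TO A r is the carrier of T_(A,r), TR A r its order, TM A r B s f the image T_f of a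
  morphism f : (A,r) -> (B,s), and supp A r the support function supp^T_(A,r).\<close>
definition prae_dilator ::
  "('a set \<Rightarrow> 'a rel \<Rightarrow> 'b set) \<Rightarrow> ('a set \<Rightarrow> 'a rel \<Rightarrow> 'b rel)
   \<Rightarrow> ('a set \<Rightarrow> 'a rel \<Rightarrow> 'a set \<Rightarrow> 'a rel \<Rightarrow> ('a \<Rightarrow> 'a) \<Rightarrow> 'b \<Rightarrow> 'b)
   \<Rightarrow> ('a set \<Rightarrow> 'a rel \<Rightarrow> 'b \<Rightarrow> 'a set) \<Rightarrow> bool" where
  "prae_dilator TO TR TM supp \<longleftrightarrow>
    \<comment> \<open>functor on objects\<close>
    (\<forall>A r. lin_ord A r \<longrightarrow> lin_ord (TO A r) (TR A r)) \<and>
    \<comment> \<open>functor on morphisms: T_f is an embedding T_X -> T_Y\<close>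
    (\<forall>A r B s f. lin_ord A r \<longrightarrow> lin_ord B s \<longrightarrow> ord_emb A r B s f \<longrightarrow>
        ord_emb (TO A r) (TR A r) (TO B s) (TR B s) (TM A r B s f)) \<and>
    \<comment> \<open>T_f depends only on f as a function on the carrier\<close>
    (\<forall>A r B s f g. lin_ord A r \<longrightarrow> lin_ord B s \<longrightarrow> ord_emb A r B s f \<longrightarrow>
        (\<forall>x\<in>A. f x = g x) \<longrightarrow> (\<forall>\<sigma>\<in>TO A r. TM A r B s f \<sigma> = TM A r B s g \<sigma>)) \<and>
    \<comment> \<open>preservation of identities\<close>
    (\<forall>A r. lin_ord A r \<longrightarrow> (\<forall>\<sigma>\<in>TO A r. TM A r A r id \<sigma> = \<sigma>)) \<and>
    \<comment> \<open>preservation of composition\<close>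
    (\<forall>A r B s C t f g. lin_ord A r \<longrightarrow> lin_ord B s \<longrightarrow> lin_ord C t \<longrightarrow>
        ord_emb A r B s f \<longrightarrow> ord_emb B s C t g \<longrightarrow>
        (\<forall>\<sigma>\<in>TO A r. TM A r C t (g \<circ> f) \<sigma> = TM B s C t g (TM A r B s f \<sigma>))) \<and>
    \<comment> \<open>supp_X : T_X -> [X]^<omega\<close>
    (\<forall>A r. lin_ord A r \<longrightarrow> (\<forall>\<sigma>\<in>TO A r. finite (supp A r \<sigma>) \<and> supp A r \<sigma> \<subseteq> A)) \<and>
    \<comment> \<open>naturality of supp\<close>
    (\<forall>A r B s f. lin_ord A r \<longrightarrow> lin_ord B s \<longrightarrow> ord_emb A r B s f \<longrightarrow>
        (\<forall>\<sigma>\<in>TO A r. supp B s (TM A r B s f \<sigma>) = f ` supp A r \<sigma>)) \<and>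
    \<comment> \<open>support condition: sigma in rng(T_iota_sigma)\<close>
    (\<forall>A r. lin_ord A r \<longrightarrow> (\<forall>\<sigma>\<in>TO A r.
        \<sigma> \<in> TM (supp A r \<sigma>) (restr r (supp A r \<sigma>)) A r id ` TO (supp A r \<sigma>) (restr r (supp A r \<sigma>))))"

datatype 'b theta_term = Theta 'b

definition theta_set :: "('a set \<Rightarrow> 'a rel \<Rightarrow> 'b set) \<Rightarrow> 'a set \<Rightarrow> 'a rel \<Rightarrow> 'b theta_term set" where
  "theta_set TO A r = Theta ` TO A r"

fun L_theta :: "('a set \<Rightarrow> 'a rel \<Rightarrow> 'b \<Rightarrow> 'a set) \<Rightarrow> 'a set \<Rightarrow> 'a rel \<Rightarrow> ('a \<Rightarrow> nat)
    \<Rightarrow> 'b theta_term \<Rightarrow> nat" where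
  "L_theta supp A r L (Theta \<sigma>) = Max (insert 0 (L ` supp A r \<sigma>)) + 1"

definition BH_system ::
  "('a set \<Rightarrow> 'a rel \<Rightarrow> 'b set) \<Rightarrow> ('a set \<Rightarrow> 'a rel \<Rightarrow> 'b \<Rightarrow> 'a set)
   \<Rightarrow> 'a set \<Rightarrow> 'a rel \<Rightarrow> ('a \<Rightarrow> 'b theta_term) \<Rightarrow> ('a \<Rightarrow> nat) \<Rightarrow> bool" where
  "BH_system TO supp A r \<iota> L \<longleftrightarrow>
     lin_ord A r \<and> \<iota> ` A \<subseteq> theta_set TO A r \<and>
     (\<forall>x\<in>A. L_theta supp A r L (\<iota> x) = L x)"

text \<open>The paper defines it by recursion on
  L(theta sigma) + L(theta tau); all recursive occurrences are positive, so it is the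
  least (and, by well-foundedness of the recursion, the unique) relation satisfying
  the defining clauses (a) and (b).\<close>
inductive theta_less for TO TR supp A r \<iota> where
  clause_a: "\<sigma> \<in> TO A r \<Longrightarrow> \<tau> \<in> TO A r \<Longrightarrow> (\<sigma>, \<tau>) \<in> TR A r \<Longrightarrow>
     (\<forall>x\<in>supp A r \<sigma>. theta_less TO TR supp A r \<iota> (\<iota> x) (Theta \<tau>)) \<Longrightarrow>
     theta_less TO TR supp A r \<iota> (Theta \<sigma>) (Theta \<tau>)"
| clause_b: "\<sigma> \<in> TO A r \<Longrightarrow> \<tau> \<in> TO A r \<Longrightarrow> (\<tau>, \<sigma>) \<in> TR A r \<Longrightarrow>
     (\<exists>y\<in>supp A r \<tau>. theta_less TO TR supp A r \<iota> (Theta \<sigma>) (\<iota> y) \<or> Theta \<sigma> = \<iota> y) \<Longrightarrow>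
     theta_less TO TR supp A r \<iota> (Theta \<sigma>) (Theta \<tau>)"

end

theory Submission
  imports Defs
begin

text \<open>Both transitivity and totality are proved by induction on the sum of the levels of
  the terms involved: clauses (a) and (b) only compare a term with the terms \<open>\<iota> x\<close> for
  \<open>x\<close> in a support, and these have strictly smaller level. Beyond this level drop, the
  argument uses only that \<open>T\<^sub>X\<close> is linearly ordered.\<close>

locale ranked_theta_system =
  fixes TO :: "'a set \<Rightarrow> 'a rel \<Rightarrow> 'b set"
    and TR :: "'a set \<Rightarrow> 'a rel \<Rightarrow> 'b rel"
    and supp :: "'a set \<Rightarrow> 'a rel \<Rightarrow> 'b \<Rightarrow> 'a set"
    and A :: "'a set" and r :: "'a rel"
    and \<iota> :: "'a \<Rightarrow> 'b theta_term" and rank :: "'b theta_term \<Rightarrow> nat"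
  assumes linear_T: "strict_linear_order_on (TO A r) (TR A r)"
    and rank_supp_less: "\<sigma> \<in> TO A r \<Longrightarrow> x \<in> supp A r \<sigma> \<Longrightarrow> rank (\<iota> x) < rank (Theta \<sigma>)"
    and iota_supp_in_theta_set: "\<sigma> \<in> TO A r \<Longrightarrow> x \<in> supp A r \<sigma> \<Longrightarrow> \<iota> x \<in> theta_set TO A r"
begin

abbreviation theta_lt (infix "\<prec>" 50) where
  "a \<prec> b \<equiv> theta_less TO TR supp A r \<iota> a b"

abbreviation theta_le (infix "\<preceq>" 50) where
  "a \<preceq> b \<equiv> a \<prec> b \<or> a = b"

lemma T_irrefl: "(\<sigma>, \<sigma>) \<notin> TR A r"
  using linear_T by (auto simp: strict_linear_order_on_def irrefl_def)

lemma T_trans: "(\<rho>, \<sigma>) \<in> TR A r \<Longrightarrow> (\<sigma>, \<tau>) \<in> TR A r \<Longrightarrow> (\<rho>, \<tau>) \<in> TR A r"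
  using linear_T unfolding strict_linear_order_on_def by (meson transD)

lemma T_cases:
  assumes "\<sigma> \<in> TO A r" "\<tau> \<in> TO A r"
  obtains "(\<sigma>, \<tau>) \<in> TR A r" | "\<sigma> = \<tau>" | "(\<tau>, \<sigma>) \<in> TR A r"
  using linear_T assms unfolding strict_linear_order_on_def total_on_def by blast

lemma Theta_less_Theta_iff:
  "Theta \<sigma> \<prec> Theta \<tau> \<longleftrightarrow> \<sigma> \<in> TO A r \<and> \<tau> \<in> TO A r \<and>
     ((\<sigma>, \<tau>) \<in> TR A r \<and> (\<forall>x\<in>supp A r \<sigma>. \<iota> x \<prec> Theta \<tau>) \<or>
      (\<tau>, \<sigma>) \<in> TR A r \<and> (\<exists>y\<in>supp A r \<tau>. Theta \<sigma> \<preceq> \<iota> y))"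
  by (auto elim: theta_less.cases intro: theta_less.intros)

lemma theta_less_irrefl: "\<not> a \<prec> a"
proof
  assume "a \<prec> a"
  then show False by (cases rule: theta_less.cases) (auto simp: T_irrefl)
qed

definition trans_below :: "nat \<Rightarrow> bool" where
  "trans_below n \<longleftrightarrow> (\<forall>a b c. rank a + rank b + rank c < n \<longrightarrow> a \<prec> b \<longrightarrow> b \<prec> c \<longrightarrow> a \<prec> c)"

lemma less_le_trans_below:
  "trans_below n \<Longrightarrow> rank a + rank b + rank c < n \<Longrightarrow> a \<prec> b \<Longrightarrow> b \<preceq> c \<Longrightarrow> a \<prec> c"
  unfolding trans_below_def by blast

lemma le_less_trans_below:
  "trans_below n \<Longrightarrow> rank a + rank b + rank c < n \<Longrightarrow> a \<preceq> b \<Longrightarrow> b \<prec> c \<Longrightarrow> a \<prec> c"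
  unfolding trans_below_def by blast

lemma trans_step_clause_a:
  assumes IH: "trans_below (rank (Theta \<rho>) + rank (Theta \<sigma>) + rank (Theta \<tau>))"
    and \<rho>: "\<rho> \<in> TO A r" and \<rho>\<sigma>: "(\<rho>, \<sigma>) \<in> TR A r"
    and supp_\<rho>: "\<forall>x\<in>supp A r \<rho>. \<iota> x \<prec> Theta \<sigma>"
    and \<sigma>\<tau>: "Theta \<sigma> \<prec> Theta \<tau>"
  shows "Theta \<rho> \<prec> Theta \<tau>"
proof -
  have \<tau>: "\<tau> \<in> TO A r" using \<sigma>\<tau> by (simp add: Theta_less_Theta_iff)
  have supp_\<rho>_below_\<tau>: "\<forall>x\<in>supp A r \<rho>. \<iota> x \<prec> Theta \<tau>"
    using le_less_trans_below[OF IH] rank_supp_less[OF \<rho>] supp_\<rho> \<sigma>\<tau>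
    by (metis add_less_mono1)
  from \<sigma>\<tau> consider "(\<sigma>, \<tau>) \<in> TR A r"
    | y where "(\<tau>, \<sigma>) \<in> TR A r" "y \<in> supp A r \<tau>" "Theta \<sigma> \<preceq> \<iota> y"
    by (auto simp: Theta_less_Theta_iff)
  then show ?thesis
  proof cases
    case 1
    then show ?thesis using \<rho> \<tau> T_trans[OF \<rho>\<sigma>] supp_\<rho>_below_\<tau> by (blast intro: clause_a)
  next
    case (2 y)
    have rank_y: "rank (\<iota> y) < rank (Theta \<tau>)" using rank_supp_less[OF \<tau> 2(2)] .
    have \<rho>_below_y: "Theta \<rho> \<prec> \<iota> y"
      using less_le_trans_below[OF IH _ _ 2(3)] rank_y clause_a[OF \<rho> _ \<rho>\<sigma> supp_\<rho>] \<sigma>\<tau>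
      by (simp add: Theta_less_Theta_iff)
    from \<rho> \<tau> show ?thesis
    proof (cases rule: T_cases)
      case 1
      then show ?thesis using \<rho> \<tau> supp_\<rho>_below_\<tau> by (blast intro: clause_a)
    next
      case 2
      have "\<iota> y \<prec> Theta \<sigma>" using supp_\<rho> 2 \<open>y \<in> supp A r \<tau>\<close> by blast
      then have "\<iota> y \<prec> \<iota> y"
        using less_le_trans_below[OF IH _ _ \<open>Theta \<sigma> \<preceq> \<iota> y\<close>] rank_y 2 by simp
      then show ?thesis using theta_less_irrefl by blast
    next
      case 3
      then show ?thesis using \<rho> \<tau> \<rho>_below_y \<open>y \<in> supp A r \<tau>\<close> by (blast intro: clause_b)
    qed
  qed
qed

lemma trans_step_clause_b:
  assumes IH: "trans_below (rank (Theta \<rho>) + rank (Theta \<sigma>) + rank (Theta \<tau>))"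
    and \<rho>\<sigma>: "Theta \<rho> \<prec> Theta \<sigma>" and \<sigma>\<rho>: "(\<sigma>, \<rho>) \<in> TR A r"
    and y: "y \<in> supp A r \<sigma>" and \<rho>_le_y: "Theta \<rho> \<preceq> \<iota> y"
    and \<sigma>\<tau>: "Theta \<sigma> \<prec> Theta \<tau>"
  shows "Theta \<rho> \<prec> Theta \<tau>"
proof -
  have \<rho>: "\<rho> \<in> TO A r" and \<sigma>: "\<sigma> \<in> TO A r" and \<tau>: "\<tau> \<in> TO A r"
    using \<rho>\<sigma> \<sigma>\<tau> by (simp_all add: Theta_less_Theta_iff)
  from \<sigma>\<tau> consider "\<forall>x\<in>supp A r \<sigma>. \<iota> x \<prec> Theta \<tau>"
    | z where "(\<tau>, \<sigma>) \<in> TR A r" "z \<in> supp A r \<tau>" "Theta \<sigma> \<preceq> \<iota> z"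
    by (auto simp: Theta_less_Theta_iff)
  then show ?thesis
  proof cases
    case 1
    then show ?thesis
      using le_less_trans_below[OF IH _ \<rho>_le_y] rank_supp_less[OF \<sigma> y] y by simp
  next
    case (2 z)
    have "Theta \<rho> \<prec> \<iota> z"
      using less_le_trans_below[OF IH _ \<rho>\<sigma> 2(3)] rank_supp_less[OF \<tau> 2(2)] by simp
    then show ?thesis using \<rho> \<tau> T_trans[OF 2(1) \<sigma>\<rho>] 2(2) by (blast intro: clause_b)
  qed
qed

lemma trans_step:
  assumes IH: "trans_below (rank a + rank b + rank c)" and ab: "a \<prec> b" and bc: "b \<prec> c"
  shows "a \<prec> c"
proof -
  obtain \<rho> \<sigma> \<tau> where a: "a = Theta \<rho>" and b: "b = Theta \<sigma>" and c: "c = Theta \<tau>"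
    by (metis theta_term.exhaust)
  from ab consider "\<rho> \<in> TO A r" "(\<rho>, \<sigma>) \<in> TR A r" "\<forall>x\<in>supp A r \<rho>. \<iota> x \<prec> Theta \<sigma>"
    | y where "(\<sigma>, \<rho>) \<in> TR A r" "y \<in> supp A r \<sigma>" "Theta \<rho> \<preceq> \<iota> y"
    unfolding a b Theta_less_Theta_iff by blast
  then show ?thesis
  proof cases
    case 1
    then show ?thesis using trans_step_clause_a IH bc unfolding a b c by blast
  next
    case (2 y)
    then show ?thesis using trans_step_clause_b IH ab bc unfolding a b c by blast
  qed
qed

lemma trans_below_all: "trans_below n"
proof (induction n rule: less_induct)
  case (less n)
  then show ?case using trans_step unfolding trans_below_def by blast
qed

lemma theta_less_trans: "a \<prec> b \<Longrightarrow> b \<prec> c \<Longrightarrow> a \<prec> c"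
  using trans_below_all unfolding trans_below_def by blast

lemma Theta_comparable_if_supp_comparable:
  assumes "\<sigma> \<in> TO A r" "\<tau> \<in> TO A r" "(\<sigma>, \<tau>) \<in> TR A r"
    and "\<forall>x\<in>supp A r \<sigma>. \<iota> x \<prec> Theta \<tau> \<or> Theta \<tau> \<preceq> \<iota> x"
  shows "Theta \<sigma> \<prec> Theta \<tau> \<or> Theta \<tau> \<prec> Theta \<sigma>"
proof (cases "\<forall>x\<in>supp A r \<sigma>. \<iota> x \<prec> Theta \<tau>")
  case True
  then show ?thesis using assms by (blast intro: clause_a)
next
  case False
  then show ?thesis using assms by (blast intro: clause_b)
qed

lemma theta_less_total:
  assumes "a \<in> theta_set TO A r" "b \<in> theta_set TO A r" "a \<noteq> b"
  shows "a \<prec> b \<or> b \<prec> a"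
  using assms
proof (induction "rank a + rank b" arbitrary: a b rule: less_induct)
  case less
  obtain \<sigma> \<tau> where a: "a = Theta \<sigma>" and b: "b = Theta \<tau>" and \<sigma>: "\<sigma> \<in> TO A r"
    and \<tau>: "\<tau> \<in> TO A r" using less.prems(1,2) by (auto simp: theta_set_def)
  have supp_comparable: "\<forall>x\<in>supp A r \<alpha>. \<iota> x \<prec> Theta \<beta> \<or> Theta \<beta> \<preceq> \<iota> x"
    if "\<alpha> \<in> TO A r" "\<beta> \<in> TO A r" "{Theta \<alpha>, Theta \<beta>} = {a, b}" for \<alpha> \<beta>
  proof
    fix x assume x: "x \<in> supp A r \<alpha>"
    have rank_less: "rank (\<iota> x) + rank (Theta \<beta>) < rank a + rank b"
      using rank_supp_less[OF that(1) x] that(3) by (auto simp: doubleton_eq_iff)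
    have \<beta>_in: "Theta \<beta> \<in> theta_set TO A r" using that(2) by (simp add: theta_set_def)
    show "\<iota> x \<prec> Theta \<beta> \<or> Theta \<beta> \<preceq> \<iota> x"
      using less.hyps[OF rank_less iota_supp_in_theta_set[OF that(1) x] \<beta>_in]
      by (cases "\<iota> x = Theta \<beta>") simp_all
  qed
  from \<sigma> \<tau> show ?case
  proof (cases rule: T_cases)
    case 1
    show ?thesis
      using Theta_comparable_if_supp_comparable[OF \<sigma> \<tau> 1 supp_comparable[OF \<sigma> \<tau>]]
      by (simp add: a b)
  next
    case 2
    then show ?thesis using less.prems(3) a b by simp
  next
    case 3
    show ?thesis
      using Theta_comparable_if_supp_comparable[OF \<tau> \<sigma> 3 supp_comparable[OF \<tau> \<sigma>]]
      by (auto simp: a b)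
  qed
qed

theorem strict_linear_order_theta_less:
  "strict_linear_order_on (theta_set TO A r) {(a, b). a \<prec> b}"
  unfolding strict_linear_order_on_def
proof (intro conjI)
  show "trans {(a, b). a \<prec> b}" unfolding trans_def by (blast intro: theta_less_trans)
  show "irrefl {(a, b). a \<prec> b}" by (simp add: irrefl_def theta_less_irrefl)
  show "total_on (theta_set TO A r) {(a, b). a \<prec> b}"
    unfolding total_on_def using theta_less_total by blast
qed

end

lemma BH_system_ranked:
  assumes "prae_dilator TO TR TM supp" and "BH_system TO supp A r \<iota> L"
  shows "ranked_theta_system TO TR supp A r \<iota> (L_theta supp A r L)"
proof
  have lin_A: "lin_ord A r" using assms(2) by (simp add: BH_system_def)
  then show "strict_linear_order_on (TO A r) (TR A r)"
    using assms(1) by (simp add: prae_dilator_def lin_ord_def)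
  fix \<sigma> x assume \<sigma>: "\<sigma> \<in> TO A r" and x: "x \<in> supp A r \<sigma>"
  have "finite (supp A r \<sigma>)" and supp_A: "supp A r \<sigma> \<subseteq> A"
    using assms(1) lin_A \<sigma> by (simp_all add: prae_dilator_def)
  then have "L x \<le> Max (insert 0 (L ` supp A r \<sigma>))" using x by (intro Max_ge) auto
  moreover have "L_theta supp A r L (\<iota> x) = L x"
    using assms(2) supp_A x by (auto simp: BH_system_def)
  ultimately show "L_theta supp A r L (\<iota> x) < L_theta supp A r L (Theta \<sigma>)" by simp
  show "\<iota> x \<in> theta_set TO A r" using assms(2) supp_A x by (auto simp: BH_system_def)
qed

theorem lemma3p4:
  fixes TO :: "'a set \<Rightarrow> 'a rel \<Rightarrow> 'b set"
    and TR :: "'a set \<Rightarrow> 'a rel \<Rightarrow> 'b rel"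
    and TM :: "'a set \<Rightarrow> 'a rel \<Rightarrow> 'a set \<Rightarrow> 'a rel \<Rightarrow> ('a \<Rightarrow> 'a) \<Rightarrow> 'b \<Rightarrow> 'b"
    and supp :: "'a set \<Rightarrow> 'a rel \<Rightarrow> 'b \<Rightarrow> 'a set"
    and A :: "'a set" and r :: "'a rel"
    and \<iota> :: "'a \<Rightarrow> 'b theta_term" and L :: "'a \<Rightarrow> nat"
  assumes "prae_dilator TO TR TM supp"
    and "BH_system TO supp A r \<iota> L"
  shows "strict_linear_order_on (theta_set TO A r)
           {(u, v). theta_less TO TR supp A r \<iota> u v}"
  using ranked_theta_system.strict_linear_order_theta_less[OF BH_system_ranked[OF assms]] .

end
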